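(* There exist connected graphs $G$ and $H$ that have no non-trivial common factor (i.e., there is no non-trivial graph $K$ with $K\mid G$ and $K\mid H$) and yet are not weakly disjoint.
   Context: A weight function on finite $U$ is $\alpha:U\times U\to\mathbb{R}$, $\alpha\ge0$, symmetric, summing to $1$; degree $p(u)=\sum_{u'}\alpha(u,u')$; a graph is $(U,\alpha)$ (self-loops allowed); connected means any two distinct vertices are joined by a path of edges $(u,u')$ with $\alpha(u,u')>0$; non-trivial means at least two vertices have positive degree. For graphs $G=(U,\alpha)$, $H=(V,\beta)$ with degrees $p,q$, $H\mid G$ means there is a surjective $\phi:U\to V$ with (i) $q(v)=\sum_{u\in\phi^{-1}(v)}p(u)$ for all $v$, and (ii) $q(v)\sum_{u'\in\phi^{-1}(v')}\alpha(u,u')=p(u)\beta(v,v')$ for all $v,v'$, $u\in\phi^{-1}(v)$. A weight joining of $\alpha,\beta$ is a weight function $\gamma$ on $U\times V$ with degree $r(u,v)=\sum_{(u',v')}\gamma((u,v),(u',v'))$ such that $\sum_v r(u,v)=p(u)$, $\sum_u r(u,v)=q(v)$, $p(u)\sum_{\tilde v}\gamma((u,v),(u',\tilde v))=\alpha(u,u')r(u,v)$ and $q(v)\sum_{\tilde u}\gamma((u,v),(\tilde u,v'))=\beta(v,v')r(u,v)$. $G,H$ are weakly disjoint if every weight joining has degree $r(u,v)=p(u)q(v)$. *)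

theory Defs
  imports Complex_Main
begin

text \<open>A graph is a finite vertex set U with a weight function alpha (only its values on U x U matter).\<close>

definition weight_fun :: "'a set \<Rightarrow> ('a \<Rightarrow> 'a \<Rightarrow> real) \<Rightarrow> bool" where
  "weight_fun U \<alpha> \<longleftrightarrow> finite U \<and>
     (\<forall>u\<in>U. \<forall>u'\<in>U. 0 \<le> \<alpha> u u' \<and> \<alpha> u u' = \<alpha> u' u) \<and>
     (\<Sum>u\<in>U. \<Sum>u'\<in>U. \<alpha> u u') = 1"

definition degree :: "'a set \<Rightarrow> ('a \<Rightarrow> 'a \<Rightarrow> real) \<Rightarrow> 'a \<Rightarrow> real" where
  "degree U \<alpha> u = (\<Sum>u'\<in>U. \<alpha> u u')"

definition graph_connected :: "'a set \<Rightarrow> ('a \<Rightarrow> 'a \<Rightarrow> real) \<Rightarrow> bool" where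
  "graph_connected U \<alpha> \<longleftrightarrow>
     (\<forall>u\<in>U. \<forall>u'\<in>U. u \<noteq> u' \<longrightarrow> (\<lambda>x y. x \<in> U \<and> y \<in> U \<and> \<alpha> x y > 0)\<^sup>*\<^sup>* u u')"

definition nontrivial_graph :: "'a set \<Rightarrow> ('a \<Rightarrow> 'a \<Rightarrow> real) \<Rightarrow> bool" where
  "nontrivial_graph U \<alpha> \<longleftrightarrow> (\<exists>u\<in>U. \<exists>u'\<in>U. u \<noteq> u' \<and> degree U \<alpha> u > 0 \<and> degree U \<alpha> u' > 0)"

text \<open>graph_factor V beta U alpha means (V,beta) divides (U,alpha).\<close>
definition graph_factor :: "'b set \<Rightarrow> ('b \<Rightarrow> 'b \<Rightarrow> real) \<Rightarrow> 'a set \<Rightarrow> ('a \<Rightarrow> 'a \<Rightarrow> real) \<Rightarrow> bool" where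
  "graph_factor V \<beta> U \<alpha> \<longleftrightarrow> (\<exists>\<phi>. \<phi> ` U = V \<and>
     (\<forall>v\<in>V. degree V \<beta> v = (\<Sum>u\<in>{u\<in>U. \<phi> u = v}. degree U \<alpha> u)) \<and>
     (\<forall>v\<in>V. \<forall>v'\<in>V. \<forall>u\<in>U. \<phi> u = v \<longrightarrow>
        degree V \<beta> v * (\<Sum>u'\<in>{u'\<in>U. \<phi> u' = v'}. \<alpha> u u') = degree U \<alpha> u * \<beta> v v'))"

definition weight_joining :: "'a set \<Rightarrow> ('a \<Rightarrow> 'a \<Rightarrow> real) \<Rightarrow> 'b set \<Rightarrow> ('b \<Rightarrow> 'b \<Rightarrow> real)
    \<Rightarrow> ('a \<times> 'b \<Rightarrow> 'a \<times> 'b \<Rightarrow> real) \<Rightarrow> bool" where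
  "weight_joining U \<alpha> V \<beta> \<gamma> \<longleftrightarrow> weight_fun (U \<times> V) \<gamma> \<and>
     (\<forall>u\<in>U. (\<Sum>v\<in>V. degree (U \<times> V) \<gamma> (u, v)) = degree U \<alpha> u) \<and>
     (\<forall>v\<in>V. (\<Sum>u\<in>U. degree (U \<times> V) \<gamma> (u, v)) = degree V \<beta> v) \<and>
     (\<forall>u\<in>U. \<forall>v\<in>V. \<forall>u'\<in>U.
        degree U \<alpha> u * (\<Sum>v'\<in>V. \<gamma> (u, v) (u', v')) = \<alpha> u u' * degree (U \<times> V) \<gamma> (u, v)) \<and>
     (\<forall>u\<in>U. \<forall>v\<in>V. \<forall>v'\<in>V.
        degree V \<beta> v * (\<Sum>u'\<in>U. \<gamma> (u, v) (u', v')) = \<beta> v v' * degree (U \<times> V) \<gamma> (u, v))"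

definition weakly_disjoint :: "'a set \<Rightarrow> ('a \<Rightarrow> 'a \<Rightarrow> real) \<Rightarrow> 'b set \<Rightarrow> ('b \<Rightarrow> 'b \<Rightarrow> real) \<Rightarrow> bool" where
  "weakly_disjoint U \<alpha> V \<beta> \<longleftrightarrow> (\<forall>\<gamma>. weight_joining U \<alpha> V \<beta> \<gamma> \<longrightarrow>
     (\<forall>u\<in>U. \<forall>v\<in>V. degree (U \<times> V) \<gamma> (u, v) = degree U \<alpha> u * degree V \<beta> v))"

end

theory Submission
  imports Defs
begin

text \<open>
  Degrees of a factor are sums of degrees over the fibres of the factor map, so a non-trivial
  factor of a two-vertex graph is a two-vertex graph with the same two degrees. Hence a
  two-vertex graph with degrees 1/2, 1/2 and one with degrees 1/6, 5/6 have no non-trivial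
  common factor. Such graphs can nevertheless admit a weight joining supported on only three
  of the four product vertices, giving (1,0) degree 0 instead of 1/2 * 1/6.
\<close>

lemma graph_connected_two_vertices:
  assumes "\<alpha> a b > 0" and "\<alpha> b a > 0"
  shows "graph_connected {a, b} \<alpha>"
  using assms unfolding graph_connected_def by (auto intro!: r_into_rtranclp)

lemma graph_factor_two_vertices:
  assumes factor: "graph_factor W \<kappa> {a, b} \<alpha>" and "nontrivial_graph W \<kappa>" and "a \<noteq> b"
  obtains \<phi> where "W = {\<phi> a, \<phi> b}" and "\<phi> a \<noteq> \<phi> b"
    and "degree W \<kappa> (\<phi> a) = degree {a, b} \<alpha> a" and "degree W \<kappa> (\<phi> b) = degree {a, b} \<alpha> b"
proof -
  obtain \<phi> where W: "W = {\<phi> a, \<phi> b}"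
    and fibre_sum: "\<forall>v\<in>W. degree W \<kappa> v = (\<Sum>u\<in>{u\<in>{a, b}. \<phi> u = v}. degree {a, b} \<alpha> u)"
    using factor unfolding graph_factor_def by auto
  have "\<phi> a \<noteq> \<phi> b"
    using \<open>nontrivial_graph W \<kappa>\<close> W unfolding nontrivial_graph_def by auto
  then have "{u\<in>{a, b}. \<phi> u = \<phi> a} = {a}" and "{u\<in>{a, b}. \<phi> u = \<phi> b} = {b}"
    by auto
  with fibre_sum W have "degree W \<kappa> (\<phi> a) = degree {a, b} \<alpha> a" "degree W \<kappa> (\<phi> b) = degree {a, b} \<alpha> b"
    by auto
  with W \<open>\<phi> a \<noteq> \<phi> b\<close> show thesis by (rule that)
qed

lemma no_common_factor_two_vertices:
  assumes "a \<noteq> b" and "c \<noteq> d"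
    and "degree {a, b} \<alpha> a = degree {a, b} \<alpha> b"
    and "degree {c, d} \<beta> c \<noteq> degree {c, d} \<beta> d"
    and "nontrivial_graph W \<kappa>"
  shows "\<not> (graph_factor W \<kappa> {a, b} \<alpha> \<and> graph_factor W \<kappa> {c, d} \<beta>)"
proof
  assume "graph_factor W \<kappa> {a, b} \<alpha> \<and> graph_factor W \<kappa> {c, d} \<beta>"
  then have factor_G: "graph_factor W \<kappa> {a, b} \<alpha>" and factor_H: "graph_factor W \<kappa> {c, d} \<beta>"
    by auto
  obtain \<phi> where "W = {\<phi> a, \<phi> b}"
    and "degree W \<kappa> (\<phi> a) = degree {a, b} \<alpha> a" and "degree W \<kappa> (\<phi> b) = degree {a, b} \<alpha> b"
    using graph_factor_two_vertices[OF factor_G \<open>nontrivial_graph W \<kappa>\<close> \<open>a \<noteq> b\<close>] by metis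
  with assms(3) have constant_degree: "degree W \<kappa> w = degree {a, b} \<alpha> a" if "w \<in> W" for w
    using that by auto
  obtain \<psi> where "\<psi> c \<in> W" "\<psi> d \<in> W"
    and "degree W \<kappa> (\<psi> c) = degree {c, d} \<beta> c" and "degree W \<kappa> (\<psi> d) = degree {c, d} \<beta> d"
    using graph_factor_two_vertices[OF factor_H \<open>nontrivial_graph W \<kappa>\<close> \<open>c \<noteq> d\<close>] by (metis insertI1 insertI2 singletonI)
  with constant_degree assms(4) show False by metis
qed

definition weight_G :: "nat \<Rightarrow> nat \<Rightarrow> real" where
  "weight_G u u' = (if u = u' then 21 else 9) / 60"

definition weight_H :: "nat \<Rightarrow> nat \<Rightarrow> real" where
  "weight_H u u' = (if u = 1 \<and> u' = 1 then 45 else 5) / 60"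

definition joining_GH :: "nat \<times> nat \<Rightarrow> nat \<times> nat \<Rightarrow> real" where
  "joining_GH z z' =
     (if {z, z'} = {(0, 0)} then 5
      else if {z, z'} = {(0, 1)} then 12
      else if {z, z'} = {(1, 1)} then 21
      else if {z, z'} = {(0, 0), (0, 1)} then 2
      else if {z, z'} = {(0, 0), (1, 1)} then 3
      else if {z, z'} = {(0, 1), (1, 1)} then 6
      else 0) / 60"

lemma degree_weight_G: "degree {0, 1} weight_G 0 = 1/2" "degree {0, 1} weight_G 1 = 1/2"
  by (simp_all add: degree_def weight_G_def)

lemma degree_weight_H: "degree {0, 1} weight_H 0 = 1/6" "degree {0, 1} weight_H 1 = 5/6"
  by (simp_all add: degree_def weight_H_def)

lemma weight_joining_GH: "weight_joining {0, 1} weight_G {0, 1} weight_H joining_GH"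
proof -
  have product: "({0, 1} :: nat set) \<times> ({0, 1} :: nat set) = {(0, 0), (0, 1), (1, 0), (1, 1)}"
    by auto
  show ?thesis
    unfolding weight_joining_def weight_fun_def degree_def product
    by (simp add: weight_G_def weight_H_def joining_GH_def insert_commute doubleton_eq_iff)
qed

lemma degree_joining_GH_1_0: "degree ({0, 1} \<times> {0, 1}) joining_GH (1, 0) = 0"
  by (simp add: degree_def joining_GH_def doubleton_eq_iff)

theorem proposition4p8:
  shows "\<exists>(U :: nat set) \<alpha> (V :: nat set) \<beta>.
    weight_fun U \<alpha> \<and> weight_fun V \<beta> \<and>
    graph_connected U \<alpha> \<and> graph_connected V \<beta> \<and>
    \<not> (\<exists>(W :: nat set) \<kappa>. weight_fun W \<kappa> \<and> nontrivial_graph W \<kappa> \<and>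
          graph_factor W \<kappa> U \<alpha> \<and> graph_factor W \<kappa> V \<beta>) \<and>
    \<not> weakly_disjoint U \<alpha> V \<beta>"
proof (intro exI conjI)
  show "weight_fun {0, 1} weight_G" "weight_fun {0, 1} weight_H"
    by (simp_all add: weight_fun_def weight_G_def weight_H_def)
  show "graph_connected {0, 1} weight_G" "graph_connected {0, 1} weight_H"
    by (simp_all add: graph_connected_two_vertices weight_G_def weight_H_def)
  show "\<not> (\<exists>(W :: nat set) \<kappa>. weight_fun W \<kappa> \<and> nontrivial_graph W \<kappa> \<and>
          graph_factor W \<kappa> {0, 1} weight_G \<and> graph_factor W \<kappa> {0, 1} weight_H)"
    using no_common_factor_two_vertices[OF zero_neq_one zero_neq_one, of weight_G weight_H,
        unfolded degree_weight_G degree_weight_H]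
    by auto
  show "\<not> weakly_disjoint {0, 1} weight_G {0, 1} weight_H"
    using weight_joining_GH degree_joining_GH_1_0 degree_weight_G degree_weight_H
    unfolding weakly_disjoint_def by force
qed

end
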